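(* Let $S$ be a finite set, $G$ a finite group, $f:S\to G$ a function, and let $\{\rho\}$, $P_\rho$, $c_\rho$, $\phi=\sum_\rho c_\rho\rho^\dagger(P_\rho)$, $u_S$ and $U_f$ be as follows: $\{\rho\}$ is a complete set of representatives of the irreducible unitary representations $\rho:G\to U(V_\rho)$; each $P_\rho$ is an orthogonal projector on $V_\rho$; all $c_\rho$ are nonzero complex numbers; $u_S=|S|^{-1/2}\sum_{s}|s\rangle$; $U_f(|s\rangle\otimes|g\rangle)=|s\rangle\otimes|f(s)g\rangle$. Let $D=\mathrm{id}_{\mathbb{C}[S]}-\frac{2}{|S|}\sum_{s,t\in S}|s\rangle\langle t|$ be the diffusion operator and $\psi=(D\otimes\mathrm{id})U_f(u_S\otimes\phi)$. Then for $s\in S$, $(\langle s|\otimes\mathrm{id})\psi=0$ (so $s$ has probability zero of being the outcome of measuring the first factor in the basis $\{|s\rangle\}$) if and only if for every $\rho$, \[ \rho(f(s))\,P_\rho=\frac{2}{|S|}\sum_{t\in S}\rho(f(t))\,P_\rho . \]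
   Context: For a finite set $X$, $\mathbb{C}[X]$ is the Hilbert space with orthonormal basis $\{|x\rangle\}$; $\mathbb{C}[G]$ is also the group algebra. Each $\rho$ is extended linearly to $\mathbb{C}[G]\to\mathrm{End}(V_\rho)$, $\mathrm{End}(V_\rho)$ has the Hilbert–Schmidt inner product, and $\rho^\dagger(M)=\sum_{h\in G}\mathrm{Tr}(\rho(h)^\dagger M)|h\rangle$. *)

theory Defs
  imports "Jordan_Normal_Form.Schur_Decomposition" "HOL-Algebra.Group"
begin

(* Matrices are Jordan_Normal_Form complex matrices; V_rho = C^(d rho). *)

definition mtrace :: "complex mat \<Rightarrow> complex" where
  "mtrace A = (\<Sum>i<dim_row A. A $$ (i, i))"

definition msum :: "nat \<Rightarrow> 'a set \<Rightarrow> ('a \<Rightarrow> complex mat) \<Rightarrow> complex mat" where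
  "msum n A F = mat n n (\<lambda>(i, j). \<Sum>a\<in>A. F a $$ (i, j))"

definition unitary_mat :: "nat \<Rightarrow> complex mat \<Rightarrow> bool" where
  "unitary_mat n U \<longleftrightarrow> U \<in> carrier_mat n n \<and> U * mat_adjoint U = 1\<^sub>m n \<and> mat_adjoint U * U = 1\<^sub>m n"

definition unitary_rep :: "('g, 'b) monoid_scheme \<Rightarrow> nat \<Rightarrow> ('g \<Rightarrow> complex mat) \<Rightarrow> bool" where
  "unitary_rep G n \<rho> \<longleftrightarrow>
     (\<forall>g\<in>carrier G. unitary_mat n (\<rho> g)) \<and>
     (\<forall>g\<in>carrier G. \<forall>h\<in>carrier G. \<rho> (g \<otimes>\<^bsub>G\<^esub> h) = \<rho> g * \<rho> h)"

definition invariant_subspace :: "('g, 'b) monoid_scheme \<Rightarrow> nat \<Rightarrow> ('g \<Rightarrow> complex mat) \<Rightarrow> complex vec set \<Rightarrow> bool" where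
  "invariant_subspace G n \<rho> W \<longleftrightarrow>
     W \<subseteq> carrier_vec n \<and> 0\<^sub>v n \<in> W \<and>
     (\<forall>v\<in>W. \<forall>w\<in>W. v + w \<in> W) \<and>
     (\<forall>a. \<forall>v\<in>W. a \<cdot>\<^sub>v v \<in> W) \<and>
     (\<forall>g\<in>carrier G. \<forall>v\<in>W. \<rho> g *\<^sub>v v \<in> W)"

definition irreducible_unitary_rep :: "('g, 'b) monoid_scheme \<Rightarrow> nat \<Rightarrow> ('g \<Rightarrow> complex mat) \<Rightarrow> bool" where
  "irreducible_unitary_rep G n \<rho> \<longleftrightarrow>
     unitary_rep G n \<rho> \<and> n > 0 \<and>
     (\<forall>W. invariant_subspace G n \<rho> W \<longrightarrow> W = {0\<^sub>v n} \<or> W = carrier_vec n)"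

definition equivalent_reps :: "('g, 'b) monoid_scheme \<Rightarrow> nat \<Rightarrow> ('g \<Rightarrow> complex mat) \<Rightarrow> nat \<Rightarrow> ('g \<Rightarrow> complex mat) \<Rightarrow> bool" where
  "equivalent_reps G n \<rho> m \<sigma> \<longleftrightarrow> n = m \<and>
     (\<exists>A\<in>carrier_mat n n. invertible_mat A \<and> (\<forall>g\<in>carrier G. A * \<rho> g = \<sigma> g * A))"

definition complete_irreps :: "('g, 'b) monoid_scheme \<Rightarrow> 'i set \<Rightarrow> ('i \<Rightarrow> nat) \<Rightarrow> ('i \<Rightarrow> 'g \<Rightarrow> complex mat) \<Rightarrow> bool" where
  "complete_irreps G R d \<rho> \<longleftrightarrow>
     (\<forall>i\<in>R. irreducible_unitary_rep G (d i) (\<rho> i)) \<and>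
     (\<forall>i\<in>R. \<forall>j\<in>R. equivalent_reps G (d i) (\<rho> i) (d j) (\<rho> j) \<longrightarrow> i = j) \<and>
     (\<forall>n \<sigma>. irreducible_unitary_rep G n \<sigma> \<longrightarrow> (\<exists>i\<in>R. equivalent_reps G n \<sigma> (d i) (\<rho> i)))"

definition orth_projector :: "nat \<Rightarrow> complex mat \<Rightarrow> bool" where
  "orth_projector n P \<longleftrightarrow> P \<in> carrier_mat n n \<and> P * P = P \<and> mat_adjoint P = P"

(* Elements of C[G] are functions 'g \<Rightarrow> complex supported on carrier G;
   elements of C[S] \<otimes> C[G] are functions 's \<times> 'g \<Rightarrow> complex supported on S \<times> carrier G. *)

definition rep_dagger :: "('g, 'b) monoid_scheme \<Rightarrow> ('g \<Rightarrow> complex mat) \<Rightarrow> complex mat \<Rightarrow> 'g \<Rightarrow> complex" where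
  "rep_dagger G \<rho> M = (\<lambda>h. if h \<in> carrier G then mtrace (mat_adjoint (\<rho> h) * M) else 0)"

definition uS_tensor :: "'s set \<Rightarrow> ('g \<Rightarrow> complex) \<Rightarrow> 's \<times> 'g \<Rightarrow> complex" where
  "uS_tensor S x = (\<lambda>(s, g). if s \<in> S then complex_of_real (1 / sqrt (real (card S))) * x g else 0)"

(* U_f (|s> \<otimes> |g>) = |s> \<otimes> |f(s) g> *)
definition U_f :: "('g, 'b) monoid_scheme \<Rightarrow> 's set \<Rightarrow> ('s \<Rightarrow> 'g) \<Rightarrow> ('s \<times> 'g \<Rightarrow> complex) \<Rightarrow> 's \<times> 'g \<Rightarrow> complex" where
  "U_f G S f x = (\<lambda>(s, h). if s \<in> S \<and> h \<in> carrier G then x (s, inv\<^bsub>G\<^esub> (f s) \<otimes>\<^bsub>G\<^esub> h) else 0)"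

definition diffusion_tensor_id :: "'s set \<Rightarrow> ('s \<times> 'g \<Rightarrow> complex) \<Rightarrow> 's \<times> 'g \<Rightarrow> complex" where
  "diffusion_tensor_id S x = (\<lambda>(s, g). if s \<in> S then x (s, g) - (2 / of_nat (card S)) * (\<Sum>t\<in>S. x (t, g)) else 0)"

end

theory Submission
  imports Defs "Jordan_Normal_Form.Spectral_Radius"
begin

text \<open>Left translation acts on \<open>\<rho>\<^sup>\<dagger>\<close> by \<open>\<rho>\<^sup>\<dagger>(M)(a\<^sup>-\<^sup>1 h) = \<rho>\<^sup>\<dagger>(\<rho>(a) M)(h)\<close>, so unfolding
  the definitions gives \<open>\<psi>(s, \<cdot>) = |S|\<^sup>-\<^sup>1\<^sup>/\<^sup>2 \<Sum>\<^sub>\<rho> \<rho>\<^sup>\<dagger>(c\<^sub>\<rho> M\<^sub>\<rho>)\<close> with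
  \<open>M\<^sub>\<rho> = \<rho>(f s) P\<^sub>\<rho> - 2/|S| \<Sum>\<^sub>t \<rho>(f t) P\<^sub>\<rho>\<close>. The Fourier map \<open>(M\<^sub>\<rho>)\<^sub>\<rho> \<mapsto> \<Sum>\<^sub>\<rho> \<rho>\<^sup>\<dagger>(M\<^sub>\<rho>)\<close>
  is injective by the Schur orthogonality relations, which come from Schur's lemma applied to the
  averaged intertwiners \<open>\<Sum>\<^sub>g \<sigma>(g) X \<rho>(g)\<^sup>\<dagger>\<close>; as every \<open>c\<^sub>\<rho> \<noteq> 0\<close>, \<open>\<psi>(s, \<cdot>)\<close> vanishes iff
  every \<open>M\<^sub>\<rho>\<close> does.\<close>

section \<open>Matrices\<close>

lemma carrier_mat_adjoint [simp]: "A \<in> carrier_mat m n \<Longrightarrow> mat_adjoint A \<in> carrier_mat n m"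
  unfolding mat_adjoint_def by (auto simp: mat_of_rows_def)

lemma dim_mat_adjoint [simp]:
  "dim_row (mat_adjoint A) = dim_col A" "dim_col (mat_adjoint A) = dim_row A"
  unfolding mat_adjoint_def by (auto simp: mat_of_rows_def)

lemma index_mat_adjoint [simp]:
  "i < dim_col A \<Longrightarrow> j < dim_row A \<Longrightarrow> mat_adjoint A $$ (i, j) = cnj (A $$ (j, i))"
  unfolding mat_adjoint_def by (auto simp: mat_of_rows_def)

lemma mat_adjoint_adjoint [simp]: "mat_adjoint (mat_adjoint (A :: complex mat)) = A"
  by (rule eq_matI) auto

lemma mat_adjoint_mult:
  assumes "A \<in> carrier_mat m n" "B \<in> carrier_mat n k"
  shows "mat_adjoint (A * B) = mat_adjoint B * (mat_adjoint A :: complex mat)"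
  using assms by (intro eq_matI) (auto simp: scalar_prod_def mult.commute intro!: sum.cong)

lemma mat_eq_zero_if_adjoint_mult_self_zero:
  assumes T: "(T :: complex mat) \<in> carrier_mat m n" and zero: "mat_adjoint T * T = 0\<^sub>m n n"
  shows "T = 0\<^sub>m m n"
proof (rule eq_matI)
  fix l k assume "l < dim_row (0\<^sub>m m n :: complex mat)" "k < dim_col (0\<^sub>m m n :: complex mat)"
  then have l: "l < m" and k: "k < n" by auto
  have "of_real (\<Sum>x<m. (cmod (T $$ (x, k)))\<^sup>2) = (\<Sum>x<m. cnj (T $$ (x, k)) * T $$ (x, k))"
    unfolding of_real_sum complex_norm_square by (simp add: mult.commute)
  also have "\<dots> = (mat_adjoint T * T) $$ (k, k)"
    using T k by (auto simp: scalar_prod_def intro!: sum.cong)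
  also have "\<dots> = 0" using zero k by simp
  finally have "(\<Sum>x<m. (cmod (T $$ (x, k)))\<^sup>2) = 0"
    by (simp only: of_real_eq_0_iff)
  then have "\<forall>x\<in>{..<m}. (cmod (T $$ (x, k)))\<^sup>2 = 0"
    by (subst sum_nonneg_eq_0_iff[symmetric]) auto
  then show "T $$ (l, k) = 0\<^sub>m m n $$ (l, k)" using l k by auto
qed (use T in auto)

lemma mat_eq_smult_one_if_eigen_everywhere:
  assumes A: "(A :: complex mat) \<in> carrier_mat n n" and eigen: "\<forall>w\<in>carrier_vec n. A *\<^sub>v w = l \<cdot>\<^sub>v w"
  shows "A = l \<cdot>\<^sub>m 1\<^sub>m n"
proof (rule eq_matI)
  fix i j assume "i < dim_row (l \<cdot>\<^sub>m 1\<^sub>m n)" "j < dim_col (l \<cdot>\<^sub>m 1\<^sub>m n)"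
  then have ij: "i < n" "j < n" by auto
  have "(A *\<^sub>v unit_vec n j) $ i = (l \<cdot>\<^sub>v unit_vec n j) $ i" using eigen by simp
  then show "A $$ (i, j) = (l \<cdot>\<^sub>m 1\<^sub>m n) $$ (i, j)"
    using A ij by (auto simp: scalar_prod_def unit_vec_def if_distrib[of "\<lambda>x. _ * x"] sum.delta
        cong: if_cong)
qed (use A in auto)

lemma invertible_mat_if_adjoint_mult_scalar:
  assumes T: "(T :: complex mat) \<in> carrier_mat n n" and "a \<noteq> 0"
    and left: "mat_adjoint T * T = a \<cdot>\<^sub>m 1\<^sub>m n" and right: "T * mat_adjoint T = a \<cdot>\<^sub>m 1\<^sub>m n"
  shows "invertible_mat T"
  unfolding invertible_mat_def inverts_mat_def
proof (intro conjI exI)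
  have T': "mat_adjoint T \<in> carrier_mat n n" using T by simp
  show "T * ((1 / a) \<cdot>\<^sub>m mat_adjoint T) = 1\<^sub>m (dim_row T)"
    using T right \<open>a \<noteq> 0\<close> by (simp add: mult_smult_distrib[OF T T'] mat_eq_iff)
  show "(1 / a) \<cdot>\<^sub>m mat_adjoint T * T = 1\<^sub>m (dim_row ((1 / a) \<cdot>\<^sub>m mat_adjoint T))"
    using T left \<open>a \<noteq> 0\<close> by (simp add: mult_smult_assoc_mat[OF T' T] mat_eq_iff)
qed (use T in auto)

lemma smult_mat_eq_zero_iff:
  assumes "M \<in> carrier_mat m n"
  shows "(c :: complex) \<cdot>\<^sub>m M = 0\<^sub>m m n \<longleftrightarrow> c = 0 \<or> M = 0\<^sub>m m n"
  using assms by (auto simp: mat_eq_iff)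

lemma minus_mat_eq_zero_iff:
  assumes "(A :: complex mat) \<in> carrier_mat m n" "B \<in> carrier_mat m n"
  shows "A - B = 0\<^sub>m m n \<longleftrightarrow> A = B"
  using assms by (auto simp: mat_eq_iff)
definition mat_sum :: "nat \<Rightarrow> nat \<Rightarrow> 'a set \<Rightarrow> ('a \<Rightarrow> complex mat) \<Rightarrow> complex mat" where
  "mat_sum m n A F = mat m n (\<lambda>(i, j). \<Sum>a\<in>A. F a $$ (i, j))"

lemma msum_eq_mat_sum: "msum n A F = mat_sum n n A F"
  unfolding msum_def mat_sum_def by simp

lemma mat_sum_carrier [simp]: "mat_sum m n A F \<in> carrier_mat m n"
  unfolding mat_sum_def by simp

lemma msum_carrier [simp]: "msum n A F \<in> carrier_mat n n"
  unfolding msum_def by simp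

lemma dim_mat_sum [simp]: "dim_row (mat_sum m n A F) = m" "dim_col (mat_sum m n A F) = n"
  unfolding mat_sum_def by simp_all

lemma index_mat_sum [simp]:
  "i < m \<Longrightarrow> j < n \<Longrightarrow> mat_sum m n A F $$ (i, j) = (\<Sum>a\<in>A. F a $$ (i, j))"
  unfolding mat_sum_def by simp

lemma mult_mat_sum:
  assumes B: "B \<in> carrier_mat k m" and F: "\<And>a. a \<in> A \<Longrightarrow> F a \<in> carrier_mat m n"
  shows "B * mat_sum m n A F = mat_sum k n A (\<lambda>a. B * F a)"
proof (rule eq_matI)
  fix i j assume "i < dim_row (mat_sum k n A (\<lambda>a. B * F a))" "j < dim_col (mat_sum k n A (\<lambda>a. B * F a))"
  then have ij: "i < k" "j < n" by auto
  have "(B * mat_sum m n A F) $$ (i, j) = (\<Sum>x<m. B $$ (i, x) * (\<Sum>a\<in>A. F a $$ (x, j)))"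
    using ij B by (auto simp: scalar_prod_def intro!: sum.cong)
  also have "\<dots> = (\<Sum>a\<in>A. \<Sum>x<m. B $$ (i, x) * F a $$ (x, j))"
    by (simp add: sum_distrib_left sum.swap[of _ A])
  also have "\<dots> = mat_sum k n A (\<lambda>a. B * F a) $$ (i, j)"
    using ij B by (auto simp: scalar_prod_def intro!: sum.cong dest!: F)
  finally show "(B * mat_sum m n A F) $$ (i, j) = mat_sum k n A (\<lambda>a. B * F a) $$ (i, j)" .
qed (use B in auto)

lemma mat_sum_mult:
  assumes B: "B \<in> carrier_mat n k" and F: "\<And>a. a \<in> A \<Longrightarrow> F a \<in> carrier_mat m n"
  shows "mat_sum m n A F * B = mat_sum m k A (\<lambda>a. F a * B)"
proof (rule eq_matI)
  fix i j assume "i < dim_row (mat_sum m k A (\<lambda>a. F a * B))" "j < dim_col (mat_sum m k A (\<lambda>a. F a * B))"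
  then have ij: "i < m" "j < k" by auto
  have "(mat_sum m n A F * B) $$ (i, j) = (\<Sum>x<n. (\<Sum>a\<in>A. F a $$ (i, x)) * B $$ (x, j))"
    using ij B by (auto simp: scalar_prod_def intro!: sum.cong)
  also have "\<dots> = (\<Sum>a\<in>A. \<Sum>x<n. F a $$ (i, x) * B $$ (x, j))"
    by (simp add: sum_distrib_right sum.swap[of _ A])
  also have "\<dots> = mat_sum m k A (\<lambda>a. F a * B) $$ (i, j)"
    using ij B by (auto simp: scalar_prod_def intro!: sum.cong dest!: F)
  finally show "(mat_sum m n A F * B) $$ (i, j) = mat_sum m k A (\<lambda>a. F a * B) $$ (i, j)" .
qed (use B in auto)

lemma mat_sum_cong:
  "(\<And>a. a \<in> A \<Longrightarrow> F a = F' a) \<Longrightarrow> mat_sum m n A F = mat_sum m n A F'"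
  unfolding mat_sum_def by (auto intro!: sum.cong)

lemma mat_sum_reindex_group_mult:
  fixes G (structure)
  assumes "group G" "h \<in> carrier G"
  shows "mat_sum m n (carrier G) (\<lambda>g. F (h \<otimes> g)) = mat_sum m n (carrier G) F"
proof -
  interpret group G by fact
  have "(\<Sum>g\<in>carrier G. F (h \<otimes> g) $$ (i, j)) = (\<Sum>g\<in>carrier G. F g $$ (i, j))" for i j
    by (rule sum.reindex_bij_witness[where i="\<lambda>g. inv h \<otimes> g" and j="\<lambda>g. h \<otimes> g"])
       (use assms(2) in \<open>auto simp: m_assoc[symmetric]\<close>)
  then show ?thesis unfolding mat_sum_def by simp
qed

lemma mtrace_mat_sum:
  "(\<And>a. a \<in> A \<Longrightarrow> F a \<in> carrier_mat n n) \<Longrightarrow> mtrace (mat_sum n n A F) = (\<Sum>a\<in>A. mtrace (F a))"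
  unfolding mtrace_def by (auto simp: sum.swap[of _ A] intro!: sum.cong)

lemma mtrace_mult_commute:
  assumes "A \<in> carrier_mat m n" "B \<in> carrier_mat n m"
  shows "mtrace (A * B) = mtrace (B * A)"
proof -
  have "mtrace (A * B) = (\<Sum>i<m. \<Sum>k<n. A $$ (i, k) * B $$ (k, i))"
    unfolding mtrace_def using assms by (auto simp: scalar_prod_def intro!: sum.cong)
  also have "\<dots> = (\<Sum>k<n. \<Sum>i<m. B $$ (k, i) * A $$ (i, k))"
    by (subst sum.swap) (simp add: mult.commute)
  also have "\<dots> = mtrace (B * A)"
    unfolding mtrace_def using assms by (auto simp: scalar_prod_def intro!: sum.cong)
  finally show ?thesis .
qed

lemma mtrace_smult: "A \<in> carrier_mat n n \<Longrightarrow> mtrace (c \<cdot>\<^sub>m A) = c * mtrace A"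
  unfolding mtrace_def by (auto simp: sum_distrib_left)

lemma mtrace_one_mat [simp]: "mtrace (1\<^sub>m n) = of_nat n"
  unfolding mtrace_def by simp

lemma mtrace_adjoint_mult:
  assumes "A \<in> carrier_mat n n" "M \<in> carrier_mat n n"
  shows "mtrace (mat_adjoint A * M) = (\<Sum>k<n. \<Sum>l<n. cnj (A $$ (l, k)) * M $$ (l, k))"
  unfolding mtrace_def using assms by (auto simp: scalar_prod_def intro!: sum.cong)

section \<open>Unitary representations\<close>

definition intertwines ::
    "('g, 'b) monoid_scheme \<Rightarrow> ('g \<Rightarrow> complex mat) \<Rightarrow> ('g \<Rightarrow> complex mat) \<Rightarrow> complex mat \<Rightarrow> bool" where
  "intertwines G \<rho> \<sigma> T \<longleftrightarrow> (\<forall>h\<in>carrier G. \<sigma> h * T = T * \<rho> h)"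

context
  fixes G :: "('g, 'b) monoid_scheme" (structure) and n :: nat and \<rho> :: "'g \<Rightarrow> complex mat"
  assumes group: "group G" and unitary: "unitary_rep G n \<rho>"
begin

lemma rep_carrier_mat: "g \<in> carrier G \<Longrightarrow> \<rho> g \<in> carrier_mat n n"
  using unitary unfolding unitary_rep_def unitary_mat_def by auto

lemma rep_adjoint_mult_self: "g \<in> carrier G \<Longrightarrow> mat_adjoint (\<rho> g) * \<rho> g = 1\<^sub>m n"
  using unitary unfolding unitary_rep_def unitary_mat_def by auto

lemma rep_mult: "g \<in> carrier G \<Longrightarrow> h \<in> carrier G \<Longrightarrow> \<rho> (g \<otimes> h) = \<rho> g * \<rho> h"
  using unitary unfolding unitary_rep_def by auto

lemma rep_one: "\<rho> \<one> = 1\<^sub>m n"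
proof -
  interpret group G by (rule group)
  have c: "\<rho> \<one> \<in> carrier_mat n n" by (simp add: rep_carrier_mat)
  have "1\<^sub>m n = mat_adjoint (\<rho> \<one>) * (\<rho> \<one> * \<rho> \<one>)"
    using rep_mult[of \<one> \<one>] rep_adjoint_mult_self[of \<one>] by simp
  also have "\<dots> = \<rho> \<one>"
    using c rep_adjoint_mult_self[of \<one>] by (simp add: assoc_mult_mat[symmetric, of _ n n _ n _ n])
  finally show ?thesis by simp
qed

lemma rep_inv: "g \<in> carrier G \<Longrightarrow> \<rho> (inv g) = mat_adjoint (\<rho> g)"
proof -
  interpret group G by (rule group)
  assume g: "g \<in> carrier G"
  have c: "\<rho> g \<in> carrier_mat n n" "\<rho> (inv g) \<in> carrier_mat n n"
    using g by (auto intro: rep_carrier_mat)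
  have right_inv: "\<rho> g * \<rho> (inv g) = 1\<^sub>m n"
    using g rep_mult[of g "inv g"] by (simp add: rep_one)
  have "\<rho> (inv g) = (mat_adjoint (\<rho> g) * \<rho> g) * \<rho> (inv g)"
    using rep_adjoint_mult_self[OF g] c by simp
  also have "\<dots> = mat_adjoint (\<rho> g) * (\<rho> g * \<rho> (inv g))"
    using c by (simp add: assoc_mult_mat[of _ n n _ n _ n])
  also have "\<dots> = mat_adjoint (\<rho> g)"
    using c by (simp add: right_inv)
  finally show ?thesis .
qed

lemma rep_dagger_expand:
  assumes "g \<in> carrier G" "M \<in> carrier_mat n n"
  shows "rep_dagger G \<rho> M g = (\<Sum>k<n. \<Sum>l<n. cnj (\<rho> g $$ (l, k)) * M $$ (l, k))"
  unfolding rep_dagger_def using assms rep_carrier_mat by (simp add: mtrace_adjoint_mult)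

lemma rep_dagger_smult:
  assumes "M \<in> carrier_mat n n"
  shows "rep_dagger G \<rho> (c \<cdot>\<^sub>m M) g = c * rep_dagger G \<rho> M g"
proof (cases "g \<in> carrier G")
  case True
  then show ?thesis using assms
    by (simp add: rep_dagger_expand[of g] sum_distrib_left ac_simps)
qed (simp add: rep_dagger_def)

lemma rep_dagger_minus:
  assumes "M \<in> carrier_mat n n" "N \<in> carrier_mat n n"
  shows "rep_dagger G \<rho> (M - N) g = rep_dagger G \<rho> M g - rep_dagger G \<rho> N g"
proof (cases "g \<in> carrier G")
  case True
  then show ?thesis using assms
    by (simp add: rep_dagger_expand[OF True] rep_dagger_expand[OF True minus_carrier_mat]
        sum_subtractf algebra_simps)
qed (simp add: rep_dagger_def)

lemma rep_dagger_msum: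
  assumes "\<And>a. a \<in> A \<Longrightarrow> F a \<in> carrier_mat n n"
  shows "rep_dagger G \<rho> (msum n A F) g = (\<Sum>a\<in>A. rep_dagger G \<rho> (F a) g)"
proof (cases "g \<in> carrier G")
  case True
  then show ?thesis using assms
    by (simp add: rep_dagger_expand[OF True] msum_eq_mat_sum sum_distrib_left sum.swap[of _ A])
qed (simp add: rep_dagger_def)

lemma rep_dagger_translate:
  assumes a: "a \<in> carrier G" and g: "g \<in> carrier G" and M: "M \<in> carrier_mat n n"
  shows "rep_dagger G \<rho> M (inv a \<otimes> g) = rep_dagger G \<rho> (\<rho> a * M) g"
proof -
  interpret group G by (rule group)
  have ca: "\<rho> a \<in> carrier_mat n n" and cg: "\<rho> g \<in> carrier_mat n n"
    using a g by (auto intro: rep_carrier_mat)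
  have "mat_adjoint (\<rho> (inv a \<otimes> g)) = mat_adjoint (\<rho> g) * \<rho> a"
    using a g ca cg by (simp add: rep_mult rep_inv mat_adjoint_mult[of _ n n _ n])
  then show ?thesis
    unfolding rep_dagger_def using a g ca cg M by (simp add: assoc_mult_mat[of _ n n _ n _ n])
qed

end

lemma intertwines_adjoint:
  fixes G (structure)
  assumes group: "group G" and unitary: "unitary_rep G n \<rho>" and unitary': "unitary_rep G n' \<sigma>"
    and T: "T \<in> carrier_mat n' n" and "intertwines G \<rho> \<sigma> T"
  shows "intertwines G \<sigma> \<rho> (mat_adjoint T)"
  unfolding intertwines_def
proof
  fix h assume h: "h \<in> carrier G"
  have "inv h \<in> carrier G" using group h by simp
  then have "\<sigma> (inv h) * T = T * \<rho> (inv h)"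
    using assms(5) unfolding intertwines_def by blast
  then have "mat_adjoint (mat_adjoint (\<sigma> h) * T) = mat_adjoint (T * mat_adjoint (\<rho> h))"
    using rep_inv[OF group unitary h] rep_inv[OF group unitary' h] by simp
  then show "\<rho> h * mat_adjoint T = mat_adjoint T * \<sigma> h"
    using rep_carrier_mat[OF group unitary h] rep_carrier_mat[OF group unitary' h] T
    by (simp add: mat_adjoint_mult[of _ n' n _ n] mat_adjoint_mult[of _ n' n' _ n])
qed

lemma intertwines_mult:
  assumes "intertwines G \<rho> \<sigma> T" "intertwines G \<sigma> \<tau> T'"
    and rep: "\<And>h. h \<in> carrier G \<Longrightarrow> \<rho> h \<in> carrier_mat n n"
    and rep': "\<And>h. h \<in> carrier G \<Longrightarrow> \<sigma> h \<in> carrier_mat n' n'"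
    and rep'': "\<And>h. h \<in> carrier G \<Longrightarrow> \<tau> h \<in> carrier_mat n'' n''"
    and T: "T \<in> carrier_mat n' n" and T': "T' \<in> carrier_mat n'' n'"
  shows "intertwines G \<rho> \<tau> (T' * T)"
  unfolding intertwines_def
proof
  fix h assume h: "h \<in> carrier G"
  have "\<tau> h * (T' * T) = (\<tau> h * T') * T" using rep''[OF h] T T' by (simp add: assoc_mult_mat)
  also have "\<dots> = T' * (\<sigma> h * T)"
    using assms(2) h rep'[OF h] T T' unfolding intertwines_def by (simp add: assoc_mult_mat)
  also have "\<dots> = (T' * T) * \<rho> h"
    using assms(1) h rep[OF h] T T' unfolding intertwines_def by (simp add: assoc_mult_mat)
  finally show "\<tau> h * (T' * T) = T' * T * \<rho> h" .
qed

section \<open>Schur's lemma and the orthogonality relations\<close>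

lemma self_intertwiner_eigenspace_invariant:
  assumes group: "group G" and rep: "unitary_rep G n \<rho>"
    and A: "A \<in> carrier_mat n n" and intw: "intertwines G \<rho> \<rho> A"
  shows "invariant_subspace G n \<rho> {w \<in> carrier_vec n. A *\<^sub>v w = l \<cdot>\<^sub>v w}"
  unfolding invariant_subspace_def
proof (intro conjI ballI allI)
  show "{w \<in> carrier_vec n. A *\<^sub>v w = l \<cdot>\<^sub>v w} \<subseteq> carrier_vec n"
    "0\<^sub>v n \<in> {w \<in> carrier_vec n. A *\<^sub>v w = l \<cdot>\<^sub>v w}" using A by auto
next
  fix x y assume "x \<in> {w \<in> carrier_vec n. A *\<^sub>v w = l \<cdot>\<^sub>v w}" "y \<in> {w \<in> carrier_vec n. A *\<^sub>v w = l \<cdot>\<^sub>v w}"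
  then show "x + y \<in> {w \<in> carrier_vec n. A *\<^sub>v w = l \<cdot>\<^sub>v w}"
    using A by (auto simp: mult_add_distrib_mat_vec smult_add_distrib_vec)
next
  fix a x assume "x \<in> {w \<in> carrier_vec n. A *\<^sub>v w = l \<cdot>\<^sub>v w}"
  then have x: "x \<in> carrier_vec n" "A *\<^sub>v x = l \<cdot>\<^sub>v x" by auto
  have "A *\<^sub>v (a \<cdot>\<^sub>v x) = (a * l) \<cdot>\<^sub>v x" using A x by (simp add: mult_mat_vec smult_smult_assoc)
  also have "\<dots> = l \<cdot>\<^sub>v (a \<cdot>\<^sub>v x)" by (simp add: smult_smult_assoc mult.commute[of a l])
  finally have eigen: "A *\<^sub>v (a \<cdot>\<^sub>v x) = l \<cdot>\<^sub>v (a \<cdot>\<^sub>v x)" .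
  have "a \<cdot>\<^sub>v x \<in> carrier_vec n" using x(1) by simp
  from this eigen show "a \<cdot>\<^sub>v x \<in> {w \<in> carrier_vec n. A *\<^sub>v w = l \<cdot>\<^sub>v w}"
    unfolding mem_Collect_eq by (rule conjI)
next
  fix h w assume h: "h \<in> carrier G" and "w \<in> {w \<in> carrier_vec n. A *\<^sub>v w = l \<cdot>\<^sub>v w}"
  then have w: "w \<in> carrier_vec n" "A *\<^sub>v w = l \<cdot>\<^sub>v w" by auto
  have \<rho>h: "\<rho> h \<in> carrier_mat n n" using rep_carrier_mat[OF group rep h] .
  have "A *\<^sub>v (\<rho> h *\<^sub>v w) = (\<rho> h * A) *\<^sub>v w"
    using intw h A \<rho>h w unfolding intertwines_def by simp
  also have "\<dots> = l \<cdot>\<^sub>v (\<rho> h *\<^sub>v w)"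
    using A \<rho>h w by (simp add: mult_mat_vec)
  finally show "\<rho> h *\<^sub>v w \<in> {w \<in> carrier_vec n. A *\<^sub>v w = l \<cdot>\<^sub>v w}" using \<rho>h w by auto
qed

lemma irreducible_self_intertwiner_scalar:
  assumes group: "group G" and irr: "irreducible_unitary_rep G n \<rho>"
    and A: "A \<in> carrier_mat n n" and intw: "intertwines G \<rho> \<rho> A"
  shows "\<exists>l. A = l \<cdot>\<^sub>m 1\<^sub>m n"
proof -
  have rep: "unitary_rep G n \<rho>" and n: "n > 0"
    and simple: "\<And>W. invariant_subspace G n \<rho> W \<Longrightarrow> W = {0\<^sub>v n} \<or> W = carrier_vec n"
    using irr unfolding irreducible_unitary_rep_def by auto
  obtain l where "eigenvalue A l" using spectrum_non_empty[OF A n] unfolding spectrum_def by auto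
  then obtain v where "eigenvector A v l" unfolding eigenvalue_def by blast
  then have v: "v \<in> carrier_vec n" "v \<noteq> 0\<^sub>v n" "A *\<^sub>v v = l \<cdot>\<^sub>v v"
    unfolding eigenvector_def using A by auto
  define W where "W = {w \<in> carrier_vec n. A *\<^sub>v w = l \<cdot>\<^sub>v w}"
  have "W = {0\<^sub>v n} \<or> W = carrier_vec n"
    unfolding W_def by (rule simple[OF self_intertwiner_eigenspace_invariant[OF group rep A intw]])
  moreover have "v \<in> W" using v unfolding W_def by auto
  ultimately have "W = carrier_vec n" using v(2) by blast
  then have "\<forall>w\<in>carrier_vec n. A *\<^sub>v w = l \<cdot>\<^sub>v w" unfolding W_def by blast
  then show ?thesis using mat_eq_smult_one_if_eigen_everywhere[OF A] by blast
qed

lemma intertwiner_inequivalent_irreducible_zero: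
  assumes group: "group G"
    and irr: "irreducible_unitary_rep G n \<rho>" and irr': "irreducible_unitary_rep G n' \<sigma>"
    and inequivalent: "\<not> equivalent_reps G n \<rho> n' \<sigma>"
    and T: "T \<in> carrier_mat n' n" and intw: "intertwines G \<rho> \<sigma> T"
  shows "T = 0\<^sub>m n' n"
proof (rule ccontr)
  assume T_nonzero: "T \<noteq> 0\<^sub>m n' n"
  have rep: "unitary_rep G n \<rho>" and rep': "unitary_rep G n' \<sigma>"
    using irr irr' unfolding irreducible_unitary_rep_def by auto
  note carrier = rep_carrier_mat[OF group rep] rep_carrier_mat[OF group rep']
  have T': "mat_adjoint T \<in> carrier_mat n n'" using T by simp
  have intw': "intertwines G \<sigma> \<rho> (mat_adjoint T)"
    by (rule intertwines_adjoint[OF group rep rep' T intw])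
  obtain a where a: "mat_adjoint T * T = a \<cdot>\<^sub>m 1\<^sub>m n"
    using irreducible_self_intertwiner_scalar[OF group irr _ intertwines_mult[OF intw intw']]
      carrier T T' by fastforce
  obtain b where b: "T * mat_adjoint T = b \<cdot>\<^sub>m 1\<^sub>m n'"
    using irreducible_self_intertwiner_scalar[OF group irr' _ intertwines_mult[OF intw' intw]]
      carrier T T' by fastforce
  have "a \<noteq> 0"
  proof
    assume "a = 0"
    then have "mat_adjoint T * T = 0\<^sub>m n n" using a by (intro eq_matI) auto
    then show False using T_nonzero mat_eq_zero_if_adjoint_mult_self_zero[OF T] by blast
  qed
  obtain i j where ij: "i < n'" "j < n" "T $$ (i, j) \<noteq> 0"
    using T_nonzero T by (auto simp: mat_eq_iff)
  have "a \<cdot>\<^sub>m T = T * (mat_adjoint T * T)" using a T by (simp add: mult_smult_distrib[of T n' n "1\<^sub>m n" n])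
  also have "\<dots> = (T * mat_adjoint T) * T" using assoc_mult_mat[OF T T' T] by simp
  also have "\<dots> = b \<cdot>\<^sub>m T" using b T by (simp add: mult_smult_assoc_mat[of "1\<^sub>m n'" n' n' T n])
  finally have "a = b" using ij T by (auto simp: mat_eq_iff)
  have "a * of_nat n = a * of_nat n'"
    using mtrace_mult_commute[OF T' T] a b \<open>a = b\<close> by (simp add: mtrace_smult[of _ n] mtrace_smult[of _ n'])
  then have dims: "n = n'" using \<open>a \<noteq> 0\<close> by simp
  have "invertible_mat T"
    using invertible_mat_if_adjoint_mult_scalar[of T n a] T a b \<open>a = b\<close> \<open>a \<noteq> 0\<close> dims by simp
  then have "equivalent_reps G n \<rho> n' \<sigma>"
    unfolding equivalent_reps_def using T dims intw unfolding intertwines_def by auto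
  with inequivalent show False ..
qed

definition intertwiner_average ::
    "('g, 'b) monoid_scheme \<Rightarrow> nat \<Rightarrow> nat \<Rightarrow> ('g \<Rightarrow> complex mat) \<Rightarrow> ('g \<Rightarrow> complex mat) \<Rightarrow>
      complex mat \<Rightarrow> complex mat" where
  "intertwiner_average G n' n \<sigma> \<rho> X = mat_sum n' n (carrier G) (\<lambda>g. \<sigma> g * X * mat_adjoint (\<rho> g))"

lemma intertwiner_average_carrier [simp]: "intertwiner_average G n' n \<sigma> \<rho> X \<in> carrier_mat n' n"
  unfolding intertwiner_average_def by simp

lemma rep_conjugate_translate:
  fixes G (structure)
  assumes group: "group G" and rep: "unitary_rep G n \<rho>" and rep': "unitary_rep G n' \<sigma>"
    and X: "X \<in> carrier_mat n' n" and h: "h \<in> carrier G" and g: "g \<in> carrier G"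
  shows "\<sigma> h * (\<sigma> g * X * mat_adjoint (\<rho> g)) = \<sigma> (h \<otimes> g) * X * mat_adjoint (\<rho> (h \<otimes> g)) * \<rho> h"
proof -
  interpret group G by (rule group)
  note carrier = rep_carrier_mat[OF group rep] rep_carrier_mat[OF group rep']
  have hg: "h \<otimes> g \<in> carrier G" using h g by simp
  have \<sigma>h: "\<sigma> h \<in> carrier_mat n' n'" and \<sigma>g: "\<sigma> g \<in> carrier_mat n' n'"
    and \<sigma>hg: "\<sigma> (h \<otimes> g) \<in> carrier_mat n' n'" and \<rho>h: "\<rho> h \<in> carrier_mat n n"
    and \<rho>g': "\<rho> (inv g) \<in> carrier_mat n n" and \<rho>hg': "\<rho> (inv (h \<otimes> g)) \<in> carrier_mat n n"
    using carrier h g hg by auto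
  have "\<sigma> h * (\<sigma> g * X * mat_adjoint (\<rho> g)) = (\<sigma> h * \<sigma> g) * X * \<rho> (inv g)"
    using g \<sigma>h \<sigma>g X \<rho>g'
    by (simp add: rep_inv[OF group rep] assoc_mult_mat[of _ n' n' _ n _ n] assoc_mult_mat[of _ n' n' _ n' _ n])
  also have "\<dots> = \<sigma> (h \<otimes> g) * X * (\<rho> (inv (h \<otimes> g)) * \<rho> h)"
  proof -
    have "inv (h \<otimes> g) \<otimes> h = inv g" using h g by (simp add: inv_mult_group m_assoc)
    then have "\<rho> (inv (h \<otimes> g)) * \<rho> h = \<rho> (inv g)"
      using rep_mult[OF group rep, of "inv (h \<otimes> g)" h] h hg by simp
    then show ?thesis using h g by (simp add: rep_mult[OF group rep'])
  qed
  also have "\<dots> = \<sigma> (h \<otimes> g) * X * mat_adjoint (\<rho> (h \<otimes> g)) * \<rho> h"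
    using hg \<sigma>hg X \<rho>hg' \<rho>h
    by (simp add: rep_inv[OF group rep, symmetric] assoc_mult_mat[of _ n' n' _ n _ n]
        assoc_mult_mat[of _ n' n _ n _ n])
  finally show ?thesis .
qed

lemma intertwines_intertwiner_average:
  fixes G (structure)
  assumes group: "group G" and rep: "unitary_rep G n \<rho>" and rep': "unitary_rep G n' \<sigma>"
    and X: "X \<in> carrier_mat n' n"
  shows "intertwines G \<rho> \<sigma> (intertwiner_average G n' n \<sigma> \<rho> X)"
  unfolding intertwines_def
proof
  fix h assume h: "h \<in> carrier G"
  define F where "F g = \<sigma> g * X * mat_adjoint (\<rho> g)" for g
  note carrier = rep_carrier_mat[OF group rep] rep_carrier_mat[OF group rep']
  have F: "F g \<in> carrier_mat n' n" if "g \<in> carrier G" for g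
    unfolding F_def using carrier[OF that] X by auto
  have "\<sigma> h * mat_sum n' n (carrier G) F = mat_sum n' n (carrier G) (\<lambda>g. \<sigma> h * F g)"
    using carrier[OF h] F by (simp add: mult_mat_sum)
  also have "\<dots> = mat_sum n' n (carrier G) (\<lambda>g. F (h \<otimes> g) * \<rho> h)"
    unfolding F_def by (rule mat_sum_cong) (rule rep_conjugate_translate[OF group rep rep' X h])
  also have "\<dots> = mat_sum n' n (carrier G) F * \<rho> h"
    using carrier[OF h] F mat_sum_reindex_group_mult[OF group h, of n' n "\<lambda>g. F g * \<rho> h"]
    by (simp add: mat_sum_mult)
  finally show "\<sigma> h * intertwiner_average G n' n \<sigma> \<rho> X = intertwiner_average G n' n \<sigma> \<rho> X * \<rho> h"
    unfolding intertwiner_average_def F_def .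
qed

lemma mtrace_intertwiner_average:
  assumes group: "group G" and rep: "unitary_rep G n \<rho>" and X: "X \<in> carrier_mat n n"
  shows "mtrace (intertwiner_average G n n \<rho> \<rho> X) = of_nat (card (carrier G)) * mtrace X"
proof -
  have "mtrace (\<rho> g * X * mat_adjoint (\<rho> g)) = mtrace X" if g: "g \<in> carrier G" for g
  proof -
    have \<rho>g: "\<rho> g \<in> carrier_mat n n" using rep_carrier_mat[OF group rep g] .
    have "mtrace (\<rho> g * X * mat_adjoint (\<rho> g)) = mtrace (mat_adjoint (\<rho> g) * (\<rho> g * X))"
      using \<rho>g X by (intro mtrace_mult_commute) auto
    also have "\<dots> = mtrace X"
      using \<rho>g X rep_adjoint_mult_self[OF group rep g] by (simp flip: assoc_mult_mat[of _ n n _ n _ n])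
    finally show ?thesis .
  qed
  moreover have "mtrace (intertwiner_average G n n \<rho> \<rho> X) = (\<Sum>g\<in>carrier G. mtrace (\<rho> g * X * mat_adjoint (\<rho> g)))"
    unfolding intertwiner_average_def using rep_carrier_mat[OF group rep] X
    by (intro mtrace_mat_sum) (meson mult_carrier_mat carrier_mat_adjoint)
  ultimately show ?thesis by simp
qed

lemma sum_rep_entries_eq_intertwiner_average:
  assumes group: "group G" and rep: "unitary_rep G n \<rho>" and rep': "unitary_rep G n' \<sigma>"
    and a: "a < n'" and b: "b < n'" and l: "l < n" and k: "k < n"
  shows "(\<Sum>g\<in>carrier G. \<sigma> g $$ (a, b) * cnj (\<rho> g $$ (l, k)))
    = intertwiner_average G n' n \<sigma> \<rho> (mat n' n (\<lambda>(x, y). if x = b \<and> y = k then 1 else 0)) $$ (a, l)"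
proof -
  define E :: "complex mat" where "E = mat n' n (\<lambda>(x, y). if x = b \<and> y = k then 1 else 0)"
  have "(\<sigma> g * E * mat_adjoint (\<rho> g)) $$ (a, l) = \<sigma> g $$ (a, b) * cnj (\<rho> g $$ (l, k))"
    if g: "g \<in> carrier G" for g
  proof -
    have \<rho>g: "\<rho> g \<in> carrier_mat n n" and \<sigma>g: "\<sigma> g \<in> carrier_mat n' n'"
      using rep_carrier_mat[OF group rep g] rep_carrier_mat[OF group rep' g] .
    have \<sigma>E: "(\<sigma> g * E) $$ (a, y) = (if y = k then \<sigma> g $$ (a, b) else 0)" if "y < n" for y
      using \<sigma>g a b that
      by (auto simp: E_def scalar_prod_def if_distrib[of "\<lambda>x. _ * x"] sum.delta cong: if_cong)
    have "(\<sigma> g * E * mat_adjoint (\<rho> g)) $$ (a, l) = (\<Sum>y<n. (\<sigma> g * E) $$ (a, y) * cnj (\<rho> g $$ (l, y)))"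
      using \<sigma>g \<rho>g a l by (auto simp: E_def scalar_prod_def intro!: sum.cong)
    also have "\<dots> = \<sigma> g $$ (a, b) * cnj (\<rho> g $$ (l, k))"
      using k by (simp add: \<sigma>E if_distrib[of "\<lambda>x. x * _"] sum.delta cong: if_cong)
    finally show ?thesis .
  qed
  then show ?thesis
    unfolding intertwiner_average_def E_def[symmetric] using a l by simp
qed

lemma schur_orthogonality_inequivalent:
  assumes group: "group G"
    and irr: "irreducible_unitary_rep G n \<rho>" and irr': "irreducible_unitary_rep G n' \<sigma>"
    and inequivalent: "\<not> equivalent_reps G n \<rho> n' \<sigma>"
    and "a < n'" "b < n'" "l < n" "k < n"
  shows "(\<Sum>g\<in>carrier G. \<sigma> g $$ (a, b) * cnj (\<rho> g $$ (l, k))) = 0"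
proof -
  have rep: "unitary_rep G n \<rho>" and rep': "unitary_rep G n' \<sigma>"
    using irr irr' unfolding irreducible_unitary_rep_def by auto
  let ?E = "mat n' n (\<lambda>(x, y). if x = b \<and> y = k then 1 else 0) :: complex mat"
  have "intertwiner_average G n' n \<sigma> \<rho> ?E = 0\<^sub>m n' n"
    by (rule intertwiner_inequivalent_irreducible_zero[OF group irr irr' inequivalent
          intertwiner_average_carrier intertwines_intertwiner_average[OF group rep rep']]) simp
  then show ?thesis
    using sum_rep_entries_eq_intertwiner_average[OF group rep rep'] assms(5-) by simp
qed

lemma schur_orthogonality:
  assumes group: "group G" and irr: "irreducible_unitary_rep G n \<rho>"
    and a: "a < n" and b: "b < n" and l: "l < n" and k: "k < n"
  shows "(\<Sum>g\<in>carrier G. \<rho> g $$ (a, b) * cnj (\<rho> g $$ (l, k)))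
    = (if a = l \<and> b = k then of_nat (card (carrier G)) / of_nat n else 0)"
proof -
  have rep: "unitary_rep G n \<rho>" and n: "n > 0"
    using irr unfolding irreducible_unitary_rep_def by auto
  define E :: "complex mat" where "E = mat n n (\<lambda>(x, y). if x = b \<and> y = k then 1 else 0)"
  have E: "E \<in> carrier_mat n n" unfolding E_def by simp
  obtain c where c: "intertwiner_average G n n \<rho> \<rho> E = c \<cdot>\<^sub>m 1\<^sub>m n"
    using irreducible_self_intertwiner_scalar[OF group irr intertwiner_average_carrier
        intertwines_intertwiner_average[OF group rep rep E]] by blast
  have "c * of_nat n = of_nat (card (carrier G)) * mtrace E"
    using mtrace_intertwiner_average[OF group rep E] c by (simp add: mtrace_smult[of _ n])
  moreover have "mtrace E = (if b = k then 1 else 0)"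
    unfolding E_def mtrace_def using b by (simp add: sum.delta cong: if_cong)
  ultimately have "c = (if b = k then of_nat (card (carrier G)) / of_nat n else 0)"
    using n by (auto simp: field_simps)
  then show ?thesis
    using sum_rep_entries_eq_intertwiner_average[OF group rep rep a b l k] c a l
    by (auto simp: E_def)
qed

lemma complete_irreps_unitary_rep:
  "complete_irreps G R d \<rho> \<Longrightarrow> i \<in> R \<Longrightarrow> unitary_rep G (d i) (\<rho> i)"
  unfolding complete_irreps_def irreducible_unitary_rep_def by auto

lemma complete_irreps_orthogonality:
  assumes group: "group G" and CI: "complete_irreps G R d \<rho>" and i: "i \<in> R" and j: "j \<in> R"
    and "a < d j" "b < d j" "l < d i" "k < d i"
  shows "(\<Sum>g\<in>carrier G. \<rho> j g $$ (a, b) * cnj (\<rho> i g $$ (l, k)))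
    = (if i = j \<and> a = l \<and> b = k then of_nat (card (carrier G)) / of_nat (d j) else 0)"
proof -
  have irr: "irreducible_unitary_rep G (d i) (\<rho> i)" "irreducible_unitary_rep G (d j) (\<rho> j)"
    using CI i j unfolding complete_irreps_def by auto
  show ?thesis
  proof (cases "i = j")
    case True
    then show ?thesis using schur_orthogonality[OF group irr(2)] assms(5-) by simp
  next
    case False
    then have "\<not> equivalent_reps G (d i) (\<rho> i) (d j) (\<rho> j)"
      using CI i j unfolding complete_irreps_def by auto
    then show ?thesis
      using False schur_orthogonality_inequivalent[OF group irr] assms(5-) by simp
  qed
qed

lemma rep_dagger_sum_inversion:
  assumes group: "group G" and CI: "complete_irreps G R d \<rho>" and finR: "finite R"
    and N: "\<And>i. i \<in> R \<Longrightarrow> N i \<in> carrier_mat (d i) (d i)"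
    and j: "j \<in> R" and a: "a < d j" and b: "b < d j"
  shows "(\<Sum>g\<in>carrier G. \<rho> j g $$ (a, b) * (\<Sum>i\<in>R. rep_dagger G (\<rho> i) (N i) g))
    = of_nat (card (carrier G)) / of_nat (d j) * N j $$ (a, b)"
proof -
  define C where "C = (of_nat (card (carrier G)) / of_nat (d j) :: complex)"
  note rep = complete_irreps_unitary_rep[OF CI]
  have "(\<Sum>g\<in>carrier G. \<rho> j g $$ (a, b) * (\<Sum>i\<in>R. rep_dagger G (\<rho> i) (N i) g))
      = (\<Sum>i\<in>R. \<Sum>k<d i. \<Sum>l<d i.
          N i $$ (l, k) * (\<Sum>g\<in>carrier G. \<rho> j g $$ (a, b) * cnj (\<rho> i g $$ (l, k))))"
    using N by (simp add: rep_dagger_expand[OF group rep] sum_distrib_left sum.swap[of _ "carrier G"]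
        ac_simps cong: sum.cong)
  also have "\<dots> = (\<Sum>i\<in>R. \<Sum>k<d i. \<Sum>l<d i. N i $$ (l, k) * (if i = j \<and> a = l \<and> b = k then C else 0))"
    unfolding C_def using complete_irreps_orthogonality[OF group CI _ j a b] by (auto intro!: sum.cong)
  also have "\<dots> = (\<Sum>i\<in>R. if i = j then N j $$ (a, b) * C else 0)"
  proof (rule sum.cong[OF refl])
    fix i assume "i \<in> R"
    have "(\<Sum>l<d i. N i $$ (l, k) * (if i = j \<and> a = l \<and> b = k then C else 0))
        = (if i = j \<and> b = k then N i $$ (a, k) * C else 0)" for k
      using a by (cases "i = j \<and> b = k") (auto simp: if_distrib[of "\<lambda>x. _ * x"] cong: if_cong)
    then show "(\<Sum>k<d i. \<Sum>l<d i. N i $$ (l, k) * (if i = j \<and> a = l \<and> b = k then C else 0))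
        = (if i = j then N j $$ (a, b) * C else 0)"
      using b by (simp add: if_distrib[of "\<lambda>x. _ * x"] cong: if_cong)
  qed
  also have "\<dots> = C * N j $$ (a, b)"
    using finR j by simp
  finally show ?thesis unfolding C_def .
qed

lemma rep_dagger_sum_eq_zero_iff:
  assumes group: "group G" and fin: "finite (carrier G)" and CI: "complete_irreps G R d \<rho>"
    and finR: "finite R" and N: "\<And>i. i \<in> R \<Longrightarrow> N i \<in> carrier_mat (d i) (d i)"
  shows "(\<forall>g\<in>carrier G. (\<Sum>i\<in>R. rep_dagger G (\<rho> i) (N i) g) = 0) \<longleftrightarrow> (\<forall>i\<in>R. N i = 0\<^sub>m (d i) (d i))"
proof
  assume zero: "\<forall>g\<in>carrier G. (\<Sum>i\<in>R. rep_dagger G (\<rho> i) (N i) g) = 0"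
  show "\<forall>i\<in>R. N i = 0\<^sub>m (d i) (d i)"
  proof
    fix j assume j: "j \<in> R"
    have "card (carrier G) > 0" "d j > 0"
      using CI j fin group.is_monoid[OF group] monoid.one_closed
      unfolding complete_irreps_def irreducible_unitary_rep_def by (auto simp: card_gt_0_iff)
    then have "N j $$ (a, b) = 0" if "a < d j" "b < d j" for a b
      using rep_dagger_sum_inversion[OF group CI finR N j that] zero by simp
    then show "N j = 0\<^sub>m (d j) (d j)" using N[OF j] by (intro eq_matI) auto
  qed
next
  note rep = complete_irreps_unitary_rep[OF CI]
  assume "\<forall>i\<in>R. N i = 0\<^sub>m (d i) (d i)"
  then show "\<forall>g\<in>carrier G. (\<Sum>i\<in>R. rep_dagger G (\<rho> i) (N i) g) = 0"
    by (simp add: rep_dagger_expand[OF group rep])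
qed

section \<open>The state after diffusion\<close>

lemma diffusion_U_f_rep_dagger_expansion:
  fixes G (structure)
  assumes group: "group G" and f: "\<forall>t\<in>S. f t \<in> carrier G"
    and rep: "\<And>i. i \<in> R \<Longrightarrow> unitary_rep G (d i) (\<rho> i)"
    and P: "\<And>i. i \<in> R \<Longrightarrow> P i \<in> carrier_mat (d i) (d i)"
    and s: "s \<in> S" and g: "g \<in> carrier G"
  shows "diffusion_tensor_id S (U_f G S f (uS_tensor S (\<lambda>h. \<Sum>i\<in>R. c i * rep_dagger G (\<rho> i) (P i) h))) (s, g)
    = complex_of_real (1 / sqrt (real (card S))) * (\<Sum>i\<in>R. rep_dagger G (\<rho> i)
        (c i \<cdot>\<^sub>m (\<rho> i (f s) * P i - (2 / of_nat (card S)) \<cdot>\<^sub>m msum (d i) S (\<lambda>t. \<rho> i (f t) * P i))) g)"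
proof -
  interpret group G by (rule group)
  define k where "k = complex_of_real (1 / sqrt (real (card S)))"
  define e where "e = (2 / of_nat (card S) :: complex)"
  define F where "F i t = \<rho> i (f t) * P i" for i t
  have F: "F i t \<in> carrier_mat (d i) (d i)" if "i \<in> R" "t \<in> S" for i t
    unfolding F_def using rep_carrier_mat[OF group rep] P f that by (meson mult_carrier_mat)
  have U_f: "U_f G S f (uS_tensor S (\<lambda>h. \<Sum>i\<in>R. c i * rep_dagger G (\<rho> i) (P i) h)) (t, g)
      = k * (\<Sum>i\<in>R. c i * rep_dagger G (\<rho> i) (F i t) g)" if t: "t \<in> S" for t
    unfolding U_f_def uS_tensor_def k_def F_def
    using t g f P by (simp add: rep_dagger_translate[OF group rep])
  have coefficient: "rep_dagger G (\<rho> i) (c i \<cdot>\<^sub>m (F i s - e \<cdot>\<^sub>m msum (d i) S (F i))) g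
      = c i * (rep_dagger G (\<rho> i) (F i s) g - e * (\<Sum>t\<in>S. rep_dagger G (\<rho> i) (F i t) g))"
    if i: "i \<in> R" for i
  proof -
    have average: "e \<cdot>\<^sub>m msum (d i) S (F i) \<in> carrier_mat (d i) (d i)" by simp
    have "rep_dagger G (\<rho> i) (c i \<cdot>\<^sub>m (F i s - e \<cdot>\<^sub>m msum (d i) S (F i))) g
        = c i * (rep_dagger G (\<rho> i) (F i s) g - rep_dagger G (\<rho> i) (e \<cdot>\<^sub>m msum (d i) S (F i)) g)"
      by (simp only: rep_dagger_smult[OF group rep[OF i] minus_carrier_mat[OF average]]
          rep_dagger_minus[OF group rep[OF i] F[OF i s] average])
    then show ?thesis
      using F[OF i]
      by (simp add: rep_dagger_smult[OF group rep[OF i]] rep_dagger_msum[OF group rep[OF i]])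
  qed
  have "diffusion_tensor_id S (U_f G S f (uS_tensor S (\<lambda>h. \<Sum>i\<in>R. c i * rep_dagger G (\<rho> i) (P i) h))) (s, g)
      = k * (\<Sum>i\<in>R. c i * rep_dagger G (\<rho> i) (F i s) g)
        - e * (\<Sum>t\<in>S. k * (\<Sum>i\<in>R. c i * rep_dagger G (\<rho> i) (F i t) g))"
    unfolding diffusion_tensor_id_def e_def using s U_f by simp
  also have "\<dots> = k * (\<Sum>i\<in>R. c i * (rep_dagger G (\<rho> i) (F i s) g
      - e * (\<Sum>t\<in>S. rep_dagger G (\<rho> i) (F i t) g)))"
    by (simp add: algebra_simps sum_distrib_left sum_subtractf sum.swap[of _ S])
  also have "\<dots> = k * (\<Sum>i\<in>R. rep_dagger G (\<rho> i) (c i \<cdot>\<^sub>m (F i s - e \<cdot>\<^sub>m msum (d i) S (F i))) g)"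
    using coefficient by simp
  finally show ?thesis unfolding k_def e_def F_def .
qed

theorem mainTheorem8:
  fixes G :: "('g, 'b) monoid_scheme"
    and S :: "'s set" and f :: "'s \<Rightarrow> 'g" and s :: 's
    and R :: "'i set" and d :: "'i \<Rightarrow> nat" and \<rho> :: "'i \<Rightarrow> 'g \<Rightarrow> complex mat"
    and P :: "'i \<Rightarrow> complex mat" and c :: "'i \<Rightarrow> complex"
    and \<phi> :: "'g \<Rightarrow> complex" and \<psi> :: "'s \<times> 'g \<Rightarrow> complex"
  assumes "group G" and "finite (carrier G)"
    and "finite S" and "\<forall>t\<in>S. f t \<in> carrier G"
    and "complete_irreps G R d \<rho>" and "finite R"
    and "\<forall>i\<in>R. orth_projector (d i) (P i)"
    and "\<forall>i\<in>R. c i \<noteq> 0"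
    and "\<phi> = (\<lambda>h. \<Sum>i\<in>R. c i * rep_dagger G (\<rho> i) (P i) h)"
    and "\<psi> = diffusion_tensor_id S (U_f G S f (uS_tensor S \<phi>))"
    and "s \<in> S"
  shows "(\<forall>g\<in>carrier G. \<psi> (s, g) = 0) \<longleftrightarrow>
         (\<forall>i\<in>R. \<rho> i (f s) * P i = (2 / of_nat (card S)) \<cdot>\<^sub>m msum (d i) S (\<lambda>t. \<rho> i (f t) * P i))"
proof -
  note group = assms(1) and CI = assms(5) and s = assms(11)
  note rep = complete_irreps_unitary_rep[OF CI]
  \<comment> \<open>of the projector hypothesis only the shape of \<open>P i\<close> is needed\<close>
  have P: "\<And>i. i \<in> R \<Longrightarrow> P i \<in> carrier_mat (d i) (d i)"
    using assms(7) unfolding orth_projector_def by auto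
  have F_s: "\<rho> i (f s) * P i \<in> carrier_mat (d i) (d i)" if "i \<in> R" for i
    using mult_carrier_mat[OF rep_carrier_mat[OF group rep[OF that]] P[OF that]] assms(4) s by simp
  define M where "M i = \<rho> i (f s) * P i - (2 / of_nat (card S)) \<cdot>\<^sub>m msum (d i) S (\<lambda>t. \<rho> i (f t) * P i)" for i
  have M: "M i \<in> carrier_mat (d i) (d i)" for i
    unfolding M_def by (intro minus_carrier_mat) simp
  have expansion: "\<psi> (s, g)
      = complex_of_real (1 / sqrt (real (card S))) * (\<Sum>i\<in>R. rep_dagger G (\<rho> i) (c i \<cdot>\<^sub>m M i) g)"
    if "g \<in> carrier G" for g
    unfolding assms(9,10) M_def
    by (rule diffusion_U_f_rep_dagger_expansion[OF group assms(4) rep P s that])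
  have "card S > 0" using assms(3) s by (auto simp: card_gt_0_iff)
  then have "(\<forall>g\<in>carrier G. \<psi> (s, g) = 0) \<longleftrightarrow>
      (\<forall>g\<in>carrier G. (\<Sum>i\<in>R. rep_dagger G (\<rho> i) (c i \<cdot>\<^sub>m M i) g) = 0)"
    using expansion by simp
  also have "\<dots> \<longleftrightarrow> (\<forall>i\<in>R. c i \<cdot>\<^sub>m M i = 0\<^sub>m (d i) (d i))"
    by (rule rep_dagger_sum_eq_zero_iff[OF group assms(2) CI assms(6) smult_carrier_mat[OF M]])
  also have "\<dots> \<longleftrightarrow> (\<forall>i\<in>R. M i = 0\<^sub>m (d i) (d i))"
    using assms(8) smult_mat_eq_zero_iff[OF M] by auto
  also have "\<dots> \<longleftrightarrow>
      (\<forall>i\<in>R. \<rho> i (f s) * P i = (2 / of_nat (card S)) \<cdot>\<^sub>m msum (d i) S (\<lambda>t. \<rho> i (f t) * P i))"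
    unfolding M_def using F_s by (intro ball_cong refl minus_mat_eq_zero_iff) simp_all
  finally show ?thesis .
qed

end
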